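(* Let $p$ be a prime greater than $3$. Then \[ \sum_{k=0}^{p-1}\frac{15k+4}{(-27)^k}\binom{2k}{k}^2\binom{3k}{k}\equiv 4\left(\frac{p}{3}\right)p\pmod{p^2}, \] where $\left(\frac{p}{3}\right)$ is the Legendre symbol.
   Context: The congruence is in the ring of rationals whose denominators are prime to $p$. *)

theory Defs
  imports Complex_Main "HOL-Number_Theory.Number_Theory"
begin

text \<open>Congruence in the ring Z_(p) of rationals whose denominators are prime to p:
  a is congruent to b modulo m iff (a - b) / m is a rational whose denominator is prime to p.\<close>
definition rat_cong_p :: "nat \<Rightarrow> rat \<Rightarrow> rat \<Rightarrow> rat \<Rightarrow> bool" where
  "rat_cong_p p a b m \<longleftrightarrow>
     (\<exists>u v :: int. v \<noteq> 0 \<and> coprime v (int p) \<and> a - b = m * (of_int u / of_int v))"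

end

theory Submission
  imports Defs
begin

text \<open>
  Put F(n,k) = (15n + 12k + 4) B(n,k). Together with a suitable G it forms a Wilf-Zeilberger
  pair, F(n,k+1) - F(n,k) = G(n+1,k) - G(n,k), and F(n,0) is the n-th summand.
  Let 3K + 1 = (p/3) p. Summing the WZ equation over n < p and over k between 0 and K
  replaces the sum of the F(n,0) by the sum of the F(n,K), up to terms G(p,k) that are all
  divisible by p^2 in Z_(p): the numerator of G(p,k) contains p^3, and p^3 more from the
  progressions (k+1/3)_p and (2k+2/3)_p^2, whereas the denominator contains only p!^3 and
  a single multiple of p in (2/3-k)_p. Finally F(0,K) = 12K + 4 = 4 (p/3) p, while for
  0 < n < p the squared progression in B(n,K) starts with 6K + 2 = 2(3K + 1), so that
  F(n,K) is divisible by p^2.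
\<close>

text \<open>Membership in Z_(p); the condition \<open>\<not> int p dvd v\<close> also excludes \<open>v = 0\<close>.\<close>

definition p_integral :: "nat \<Rightarrow> rat \<Rightarrow> bool" where
  "p_integral p x \<longleftrightarrow> (\<exists>u v. \<not> int p dvd v \<and> x = of_int u / of_int v)"

lemma p_integral_add:
  assumes "prime p" "p_integral p x" "p_integral p y"
  shows "p_integral p (x + y)"
proof -
  obtain u v u' v' where uv: "\<not> int p dvd v" "x = of_int u / of_int v"
      "\<not> int p dvd v'" "y = of_int u' / of_int v'"
    using assms(2,3) unfolding p_integral_def by blast
  then have "v \<noteq> 0" "v' \<noteq> 0" by auto
  then have "x + y = of_int (u * v' + u' * v) / of_int (v * v')"
    using uv by (simp add: field_simps)
  moreover have "\<not> int p dvd v * v'"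
    using uv assms(1) by (simp add: prime_dvd_mult_iff)
  ultimately show ?thesis unfolding p_integral_def by blast
qed

lemma p_integral_of_int: "prime p \<Longrightarrow> p_integral p (of_int u)"
  unfolding p_integral_def by (intro exI[of _ u] exI[of _ 1]) auto

lemma p_integral_uminus:
  assumes "p_integral p x"
  shows "p_integral p (- x)"
proof -
  obtain u v where "\<not> int p dvd v" "x = of_int u / of_int v"
    using assms unfolding p_integral_def by blast
  then have "\<not> int p dvd v \<and> - x = of_int (- u) / of_int v" by simp
  then show ?thesis unfolding p_integral_def by blast
qed

lemma p_integral_sum:
  assumes "prime p" "\<And>x. x \<in> A \<Longrightarrow> p_integral p (f x)"
  shows "p_integral p (sum f A)"
  using assms(2)
proof (induction A rule: infinite_finite_induct)
  case (insert x A)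
  then show ?case by (simp add: p_integral_add[OF assms(1)])
qed (use p_integral_of_int[OF assms(1), of 0] in simp_all)

lemma p_integral_of_int_divide:
  assumes "prime p" "D \<noteq> 0" "int p ^ multiplicity (int p) D dvd N"
  shows "p_integral p (of_int N / of_int D)"
proof -
  define m where "m = multiplicity (int p) D"
  have "\<not> is_unit (int p)" using assms(1) by auto
  then obtain D' where D: "D = int p ^ m * D'" "\<not> int p dvd D'"
    unfolding m_def by (rule multiplicity_decompose'[OF assms(2)])
  obtain N' where N: "N = int p ^ m * N'"
    using assms(3) unfolding m_def by blast
  have "int p \<noteq> 0" using assms(1) by auto
  then have "(of_int N / of_int D :: rat) = of_int N' / of_int D'"
    unfolding N D by simp
  with D(2) show ?thesis unfolding p_integral_def by blast
qed

lemma rat_cong_p_if_p_integral: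
  assumes "prime p" "m \<noteq> 0" "p_integral p ((a - b) / m)"
  shows "rat_cong_p p a b m"
proof -
  obtain u v where uv: "\<not> int p dvd v" "(a - b) / m = of_int u / of_int v"
    using assms(3) unfolding p_integral_def by blast
  have "coprime v (int p)"
    using prime_imp_coprime[of "int p" v] assms(1) uv(1) by (simp add: coprime_commute)
  moreover have "a - b = m * (of_int u / of_int v)"
    using uv(2) assms(2) by (simp add: field_simps)
  moreover have "v \<noteq> 0" using uv(1) by auto
  ultimately show ?thesis unfolding rat_cong_p_def by blast
qed

lemma of_int_fraction_eq:
  assumes "D \<noteq> 0" "D' \<noteq> 0" "N' * D * X = N * D' * Y"
  shows "of_int N' / of_int D' * of_int X = of_int N / of_int D * (of_int Y :: 'a::field_char_0)"
proof -
  have "(of_int N' * of_int D * of_int X :: 'a) = of_int N * of_int D' * of_int Y"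
    using arg_cong[OF assms(3), of of_int] by simp
  then show ?thesis using assms(1,2) by (simp add: field_simps)
qed

lemma prime_not_dvd_nine_power:
  assumes "prime p" "\<not> int p dvd 3"
  shows "\<not> int p dvd 9 ^ n"
proof -
  have pr: "prime (int p)" using assms(1) by simp
  show ?thesis
    using assms(2) prime_dvd_mult_iff[OF pr, of 3 3] prime_dvd_power[OF pr, of 9 n] by auto
qed

lemma prime_not_dvd_fact_int:
  assumes "prime p" "n < p"
  shows "\<not> int p dvd fact n"
proof -
  have "\<not> p dvd fact n" using assms prime_dvd_fact_iff[OF assms(1), of n] by simp
  then show ?thesis by (metis int_dvd_int_iff of_nat_fact)
qed

lemma multiplicity_fact_prime:
  assumes "prime p"
  shows "multiplicity (int p) (fact p) = 1"
proof -
  have "(fact p :: int) = int p * fact (p - 1)"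
    using fact_reduce[of p] prime_gt_0_nat[OF assms] by simp
  moreover have "\<not> int p dvd fact (p - 1)"
    using assms prime_gt_0_nat[OF assms] by (intro prime_not_dvd_fact_int) auto
  ultimately show ?thesis
    using assms by (simp add: prime_elem_multiplicity_mult_distrib not_dvd_imp_multiplicity_0)
qed

lemma Legendre_three_times_self:
  assumes "\<not> 3 dvd a"
  shows "[Legendre a 3 * a = 1] (mod 3)" and "\<bar>Legendre a 3\<bar> = 1"
proof -
  have "[Legendre a 3 = a] (mod 3)"
    using euler_criterion[of 3 a] by simp
  moreover have "Legendre a 3 = 1 \<or> Legendre a 3 = -1"
    using assms by (auto simp: Legendre_def cong_0_iff)
  ultimately show "[Legendre a 3 * a = 1] (mod 3)" "\<bar>Legendre a 3\<bar> = 1"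
    by (auto simp: cong_def) presburger+
qed

lemma obtain_3K_plus_1_eq_Legendre_times_prime:
  assumes "prime p" "p > 3"
  obtains K where "3 * K + 1 = Legendre (int p) 3 * int p" "\<bar>3 * K + 1\<bar> = int p"
proof -
  have "\<not> 3 dvd p" using assms prime_nat_iff[of p] by auto
  then have "\<not> 3 dvd int p" by presburger
  note L = Legendre_three_times_self[OF this]
  obtain t where "1 = Legendre (int p) 3 * int p + 3 * t"
    using L(1) unfolding cong_iff_lin by blast
  then have "3 * (- t) + 1 = Legendre (int p) 3 * int p" by simp
  moreover from this have "\<bar>3 * (- t) + 1\<bar> = int p" using L(2) by (simp add: abs_mult)
  ultimately show ?thesis by (rule that)
qed

lemma wz_telescope:
  fixes F G :: "nat \<Rightarrow> int \<Rightarrow> 'a::ab_group_add"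
  assumes wz: "\<And>n k. F n (k + 1) - F n k = G (Suc n) k - G n k"
    and G0: "\<And>k. G 0 k = 0"
    and "a \<le> b"
  shows "(\<Sum>n<N. F n b) - (\<Sum>n<N. F n a) = (\<Sum>k\<in>{a..<b}. G N k)"
  using assms(3)
proof (induction b rule: int_ge_induct)
  case (step b)
  have "(\<Sum>n<N. F n (b + 1)) - (\<Sum>n<N. F n b) = (\<Sum>n<N. G (Suc n) b - G n b)"
    by (simp add: wz sum_subtractf[symmetric])
  also have "\<dots> = G N b"
    using sum_lessThan_telescope[of "\<lambda>n. G n b" N] by (simp add: G0)
  moreover have "{a..<b + 1} = insert b {a..<b}"
    using step.hyps by auto
  ultimately show ?case
    using step.IH by (simp add: algebra_simps)
qed simp

definition ap_prod :: "int \<Rightarrow> int \<Rightarrow> nat \<Rightarrow> int" where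
  "ap_prod a d n = (\<Prod>j<n. a + d * int j)"

lemma ap_prod_0 [simp]: "ap_prod a d 0 = 1"
  by (simp add: ap_prod_def)

lemma ap_prod_Suc: "ap_prod a d (Suc n) = ap_prod a d n * (a + d * int n)"
  by (simp add: ap_prod_def)

lemma ap_prod_shift: "a * ap_prod (a + d) d n = ap_prod a d n * (a + d * int n)"
proof (induction n)
  case (Suc n)
  have "a * ap_prod (a + d) d (Suc n) = a * ap_prod (a + d) d n * (a + d * int (Suc n))"
    by (simp add: ap_prod_Suc algebra_simps)
  also have "\<dots> = ap_prod a d (Suc n) * (a + d * int (Suc n))"
    by (simp add: Suc.IH ap_prod_Suc)
  finally show ?case .
qed simp

lemma ap_prod_nonzero: "\<not> d dvd a \<Longrightarrow> ap_prod a d n \<noteq> 0"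
  unfolding ap_prod_def by (auto simp: add_eq_0_iff2)

lemma dvd_ap_prod: "j < n \<Longrightarrow> a + d * int j dvd ap_prod a d n"
  unfolding ap_prod_def by (rule dvd_prodI) auto

lemma exists_ap_term_dvd_prime:
  assumes "prime p" "\<not> int p dvd d"
  shows "\<exists>j<p. int p dvd a + d * int j"
proof -
  have "coprime d (int p)"
    using prime_imp_coprime[of "int p" d] assms by (simp add: coprime_commute)
  then obtain x where x: "[d * x = 1] (mod int p)"
    using cong_solve_coprime_int by blast
  define j where "j = (- a * x) mod int p"
  have j: "0 \<le> j" "j < int p"
    unfolding j_def using assms(1) prime_gt_0_nat by auto
  have "[a + d * j = a + (- a) * (d * x)] (mod int p)"
    unfolding j_def by (intro cong_add cong_refl) (simp add: cong_def mod_mult_right_eq algebra_simps)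
  also have "[a + (- a) * (d * x) = a + (- a) * 1] (mod int p)"
    by (intro cong_add cong_mult cong_refl x)
  finally have "int p dvd a + d * int (nat j)"
    using j by (simp add: cong_0_iff)
  moreover have "nat j < p" using j by linarith
  ultimately show ?thesis by blast
qed

lemma ap_prod_dvd_prime:
  assumes "prime p" "\<not> int p dvd d" "p \<le> n"
  shows "int p dvd ap_prod a d n"
proof -
  obtain j where "j < p" "int p dvd a + d * int j"
    using exists_ap_term_dvd_prime[OF assms(1,2)] by blast
  then show ?thesis using assms(3) dvd_ap_prod[of j n a d] by (auto intro: dvd_trans)
qed

lemma multiplicity_ap_prod_prime:
  assumes p: "prime p" "\<not> int p dvd d"
    and terms: "\<And>j. j < p \<Longrightarrow> a + d * int j \<noteq> 0 \<and> \<not> int p ^ 2 dvd a + d * int j"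
  shows "multiplicity (int p) (ap_prod a d p) = 1"
proof -
  have pr: "prime (int p)" using p by simp
  obtain j0 where j0: "j0 < p" "int p dvd a + d * int j0"
    using exists_ap_term_dvd_prime[OF p] by blast
  have other: "multiplicity (int p) (a + d * int j) = 0" if "j < p" "j \<noteq> j0" for j
  proof (rule not_dvd_imp_multiplicity_0, rule notI)
    assume "int p dvd a + d * int j"
    then have "int p dvd (a + d * int j) - (a + d * int j0)"
      using j0(2) by (rule dvd_diff)
    then have "int p dvd d * (int j - int j0)"
      by (simp add: algebra_simps)
    then have "int p dvd int j - int j0"
      using pr p(2) by (simp add: prime_dvd_mult_iff)
    moreover have "\<bar>int j - int j0\<bar> < int p" "int j - int j0 \<noteq> 0"
      using that j0(1) by auto
    ultimately show False
      using dvd_imp_le_int[of "int j - int j0" "int p"] by simp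
  qed
  have "multiplicity (int p) (a + d * int j0) = 1"
    using j0 terms[OF j0(1)] by (intro multiplicity_eqI) (simp_all add: power2_eq_square)
  moreover have "multiplicity (int p) (ap_prod a d p) = (\<Sum>j<p. multiplicity (int p) (a + d * int j))"
    unfolding ap_prod_def using pr terms
    by (subst prime_elem_multiplicity_prod_distrib) auto
  moreover have "\<dots> = (\<Sum>j\<in>{j0}. multiplicity (int p) (a + d * int j))"
    using j0(1) other by (intro sum.mono_neutral_right) auto
  ultimately show ?thesis by simp
qed

lemma fact_double_eq_ap_prod: "2 ^ n * fact n * ap_prod 1 2 n = (fact (2 * n) :: int)"
proof (induction n)
  case (Suc n)
  have "(fact (2 * Suc n) :: int) = fact (2 * n) * (2 * int n + 1) * (2 * int n + 2)"
    by (simp add: algebra_simps)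
  also have "\<dots> = 2 ^ n * fact n * ap_prod 1 2 n * (2 * int n + 1) * (2 * int n + 2)"
    by (simp only: Suc.IH)
  also have "\<dots> = 2 ^ Suc n * fact (Suc n) * ap_prod 1 2 (Suc n)"
    by (simp add: ap_prod_Suc algebra_simps)
  finally show ?case ..
qed simp

lemma fact_triple_eq_ap_prod: "3 ^ n * fact n * ap_prod 1 3 n * ap_prod 2 3 n = (fact (3 * n) :: int)"
proof (induction n)
  case (Suc n)
  have "(fact (3 * Suc n) :: int) = fact (3 * n) * (3 * int n + 1) * (3 * int n + 2) * (3 * int n + 3)"
    by (simp add: algebra_simps numeral_3_eq_3)
  also have "\<dots> = 3 ^ n * fact n * ap_prod 1 3 n * ap_prod 2 3 n
      * (3 * int n + 1) * (3 * int n + 2) * (3 * int n + 3)"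
    by (simp only: Suc.IH)
  also have "\<dots> = 3 ^ Suc n * fact (Suc n) * ap_prod 1 3 (Suc n) * ap_prod 2 3 (Suc n)"
    by (simp add: ap_prod_Suc algebra_simps)
  finally show ?case ..
qed simp

lemma binomial_product_fact:
  "(2 * n choose n) ^ 2 * (3 * n choose n) * fact n ^ 5 = fact (2 * n) * (fact (3 * n) :: nat)"
proof -
  have a: "fact n * fact n * (2 * n choose n) = fact (2 * n)"
    using binomial_fact_lemma[of n "2 * n"] by (simp add: mult_2)
  have b: "fact n * fact (2 * n) * (3 * n choose n) = fact (3 * n)"
    using binomial_fact_lemma[of n "3 * n"] by simp
  have "(2 * n choose n) ^ 2 * (3 * n choose n) * fact n ^ 5
      = (fact n * fact n * (2 * n choose n)) * (fact n * (fact n * fact n * (2 * n choose n)) * (3 * n choose n))"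
    by (simp add: power2_eq_square power_numeral_reduce ac_simps)
  then show ?thesis by (simp only: a b)
qed

text \<open>In Pochhammer notation wz_B n k = (-4)^n (1/2)_n (k+1/3)_n (2k+2/3)_n^2 / (n!^3 (2/3-k)_n);
  the integer progressions make divisibility by p visible.\<close>

definition wz_B :: "nat \<Rightarrow> int \<Rightarrow> rat" where
  "wz_B n k = of_int ((-2) ^ n * ap_prod 1 2 n * ap_prod (3*k+1) 3 n * ap_prod (6*k+2) 3 n ^ 2)
            / of_int (9 ^ n * fact n ^ 3 * ap_prod (2-3*k) 3 n)"

definition wz_F :: "nat \<Rightarrow> int \<Rightarrow> rat" where
  "wz_F n k = of_int (15 * int n + 12 * k + 4) * wz_B n k"

definition wz_Q :: "int \<Rightarrow> int \<Rightarrow> int" where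
  "wz_Q n k = 27*n^3 + (135*k+45)*n^2 + (108*k^2-36*k-51)*n - (216*k^3+540*k^2+369*k+71)"

definition wz_G :: "nat \<Rightarrow> int \<Rightarrow> rat" where
  "wz_G n k = wz_B n k * of_int (27 * int n ^ 3 * (3 * int n - 1 - 3 * k) * wz_Q (int n) k)
            / of_int (4 * (3*k+1) ^ 4 * (6*k+5) ^ 2)"

lemma wz_B_denominator_nonzero: "9 ^ n * fact n ^ 3 * ap_prod (2-3*k) 3 n \<noteq> 0"
proof -
  have "\<not> 3 dvd 2 - 3 * k" by presburger
  then show ?thesis by (simp add: ap_prod_nonzero)
qed

lemma wz_G_denominator_nonzero: "4 * (3*k+1) ^ 4 * (6*k+5) ^ 2 \<noteq> (0::int)"
  by simp presburger

lemma wz_B_shift_right: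
  "wz_B n (k + 1) * of_int (- (4 * (3*k+1) ^ 4 * (6*k+5) ^ 2))
   = wz_B n k * of_int ((3*k+1+3*int n) * ((6*k+2+3*int n) * (6*k+5+3*int n)) ^ 2 * (3*int n-1-3*k))"
proof -
  define C where "C = (-2) ^ n * ap_prod 1 2 n * (9 ^ n * fact n ^ 3)"
  have b: "(3*k+1) * ap_prod (3*(k+1)+1) 3 n = ap_prod (3*k+1) 3 n * (3*k+1+3*int n)"
    using ap_prod_shift[of "3*k+1" 3 n] by (simp add: algebra_simps)
  have c1: "(6*k+5) * ap_prod (6*(k+1)+2) 3 n = ap_prod (6*k+5) 3 n * (6*k+5+3*int n)"
    using ap_prod_shift[of "6*k+5" 3 n] by (simp add: algebra_simps)
  have c2: "(6*k+2) * ap_prod (6*k+5) 3 n = ap_prod (6*k+2) 3 n * (6*k+2+3*int n)"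
    using ap_prod_shift[of "6*k+2" 3 n] by (simp add: algebra_simps)
  have c: "(6*k+2) * (6*k+5) * ap_prod (6*(k+1)+2) 3 n
           = ap_prod (6*k+2) 3 n * (6*k+2+3*int n) * (6*k+5+3*int n)"
    by (metis c1 c2 mult.assoc)
  have d: "(-1-3*k) * ap_prod (2-3*k) 3 n = ap_prod (2-3*(k+1)) 3 n * (3*int n-1-3*k)"
    using ap_prod_shift[of "-1-3*k" 3 n] by (simp add: algebra_simps)
  have X: "- (4 * (3*k+1) ^ 4 * (6*k+5) ^ 2) = (3*k+1) * ((6*k+2) * (6*k+5)) ^ 2 * (-1-3*k)"
    by (simp add: algebra_simps power2_eq_square power4_eq_xxxx)
  have "(-2) ^ n * ap_prod 1 2 n * ap_prod (3*(k+1)+1) 3 n * ap_prod (6*(k+1)+2) 3 n ^ 2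
          * (9 ^ n * fact n ^ 3 * ap_prod (2-3*k) 3 n) * (- (4 * (3*k+1) ^ 4 * (6*k+5) ^ 2))
        = C * ((3*k+1) * ap_prod (3*(k+1)+1) 3 n) * ((6*k+2) * (6*k+5) * ap_prod (6*(k+1)+2) 3 n) ^ 2
          * ((-1-3*k) * ap_prod (2-3*k) 3 n)"
    unfolding C_def X by (simp add: power_mult_distrib ac_simps)
  also have "\<dots> = (-2) ^ n * ap_prod 1 2 n * ap_prod (3*k+1) 3 n * ap_prod (6*k+2) 3 n ^ 2
          * (9 ^ n * fact n ^ 3 * ap_prod (2-3*(k+1)) 3 n)
          * ((3*k+1+3*int n) * ((6*k+2+3*int n) * (6*k+5+3*int n)) ^ 2 * (3*int n-1-3*k))"
    unfolding b c d C_def by (simp add: power_mult_distrib ac_simps)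
  finally show ?thesis
    unfolding wz_B_def by (rule of_int_fraction_eq[OF wz_B_denominator_nonzero wz_B_denominator_nonzero])
qed

lemma wz_B_Suc_left:
  "wz_B (Suc n) k * of_int (9 * (int n + 1) ^ 3 * (2 - 3*k + 3*int n))
   = wz_B n k * of_int ((- 2) * ((2*int n + 1) * (3*k+1+3*int n) * (6*k+2+3*int n) ^ 2))"
  unfolding wz_B_def
  by (rule of_int_fraction_eq[OF wz_B_denominator_nonzero wz_B_denominator_nonzero])
     (simp only: power_Suc ap_prod_Suc fact_Suc of_nat_Suc power_mult_distrib ac_simps)

text \<open>The WZ equation divided by \<open>wz_B n k\<close>, with all denominators cleared.\<close>

lemma wz_certificate_identity:
  fixes n k :: int
  shows "(15*n+12*k+16) * ((3*k+1+3*n) * ((6*k+2+3*n) * (6*k+5+3*n)) ^ 2 * (3*n-1-3*k))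
     + (15*n+12*k+4) * (4 * (3*k+1) ^ 4 * (6*k+5) ^ 2)
   = 6 * ((2*n+1) * (3*k+1+3*n) * (6*k+2+3*n) ^ 2) * wz_Q (n+1) k
     + 27 * n ^ 3 * (3*n-1-3*k) * wz_Q n k"
  unfolding wz_Q_def by (simp add: algebra_simps power2_eq_square power3_eq_cube power4_eq_xxxx)

lemma wz_pair: "wz_F n (k + 1) - wz_F n k = wz_G (Suc n) k - wz_G n k"
proof -
  define x where "x = int n"
  define b where "b = wz_B n k"
  define D where "D = 4 * (3*k+1) ^ 4 * (6*k+5) ^ 2"
  define P where "P = (3*k+1+3*x) * ((6*k+2+3*x) * (6*k+5+3*x)) ^ 2 * (3*x-1-3*k)"
  define W where "W = (2*x+1) * (3*k+1+3*x) * (6*k+2+3*x) ^ 2"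
  have D0: "(of_int D :: rat) \<noteq> 0"
    unfolding D_def of_int_eq_0_iff by (rule wz_G_denominator_nonzero)
  have F1: "wz_F n (k + 1) * of_int D = - (b * of_int ((15*x+12*k+16) * P))"
  proof -
    have "wz_F n (k + 1) * of_int D = of_int (15*x+12*k+16) * (wz_B n (k + 1) * of_int D)"
      unfolding wz_F_def x_def by (simp add: algebra_simps)
    also have "wz_B n (k + 1) * of_int D = - (b * of_int P)"
      using wz_B_shift_right[of n k, folded x_def, folded D_def P_def b_def] by simp
    finally show ?thesis by simp
  qed
  have F0: "wz_F n k * of_int D = b * of_int ((15*x+12*k+4) * D)"
    unfolding wz_F_def b_def x_def by simp
  have G1: "wz_G (Suc n) k * of_int D = - (b * of_int (6 * W * wz_Q (x+1) k))"
  proof -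
    have "wz_G (Suc n) k * of_int D
        = wz_B (Suc n) k * of_int (27 * int (Suc n) ^ 3 * (3 * int (Suc n) - 1 - 3*k) * wz_Q (int (Suc n)) k)"
      using D0 unfolding wz_G_def D_def[symmetric] by simp
    also have "27 * int (Suc n) ^ 3 * (3 * int (Suc n) - 1 - 3*k) * wz_Q (int (Suc n)) k
        = 9 * (x + 1) ^ 3 * (2 - 3*k + 3*x) * (3 * wz_Q (x+1) k)"
      unfolding x_def by (simp add: algebra_simps)
    also have "wz_B (Suc n) k * of_int (9 * (x + 1) ^ 3 * (2 - 3*k + 3*x) * (3 * wz_Q (x+1) k))
        = wz_B (Suc n) k * of_int (9 * (x + 1) ^ 3 * (2 - 3*k + 3*x)) * of_int (3 * wz_Q (x+1) k)"
      by (simp only: of_int_mult mult.assoc)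
    also have "wz_B (Suc n) k * of_int (9 * (x + 1) ^ 3 * (2 - 3*k + 3*x)) = - (b * of_int (2 * W))"
      using wz_B_Suc_left[of n k, folded x_def, folded b_def] unfolding W_def by simp
    finally show ?thesis by (simp add: algebra_simps)
  qed
  have G0: "wz_G n k * of_int D = b * of_int (27 * x ^ 3 * (3*x-1-3*k) * wz_Q x k)"
    using D0 unfolding wz_G_def D_def[symmetric] b_def x_def by simp
  have "(wz_F n (k + 1) - wz_F n k - (wz_G (Suc n) k - wz_G n k)) * of_int D
      = b * of_int (6 * W * wz_Q (x+1) k + 27 * x ^ 3 * (3*x-1-3*k) * wz_Q x k
                    - ((15*x+12*k+16) * P + (15*x+12*k+4) * D))"
    unfolding left_diff_distrib F1 F0 G1 G0 by (simp add: algebra_simps)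
  also have "\<dots> = 0"
    using wz_certificate_identity[of x k, folded P_def D_def W_def] by simp
  finally show ?thesis using D0 by simp
qed

lemma wz_G_0_left [simp]: "wz_G 0 k = 0"
  by (simp add: wz_G_def)

lemma wz_F_0_left [simp]: "wz_F 0 k = of_int (12 * k + 4)"
  by (simp add: wz_F_def wz_B_def)

lemma wz_F_0_right:
  "wz_F n 0 = (15 * of_nat n + 4) / (-27) ^ n * of_nat ((2 * n choose n) ^ 2 * (3 * n choose n))"
proof -
  define C where "C = (2 * n choose n) ^ 2 * (3 * n choose n)"
  let ?pa = "ap_prod 1 2 n" and ?pb = "ap_prod 1 3 n" and ?pc = "ap_prod 2 3 n"
  have "int C * (9 ^ n * fact n ^ 3 * ?pc) * fact n ^ 2 = int C * fact n ^ 5 * 9 ^ n * ?pc"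
    by (simp add: power_numeral_reduce ac_simps)
  also have "int C * fact n ^ 5 = (2 ^ n * fact n * ?pa) * (3 ^ n * fact n * ?pb * ?pc)"
    unfolding fact_double_eq_ap_prod fact_triple_eq_ap_prod C_def
    using arg_cong[OF binomial_product_fact[of n], of int] by simp
  also have "\<dots> * 9 ^ n * ?pc = (-2) ^ n * ?pa * ?pb * ?pc ^ 2 * (-27) ^ n * fact n ^ 2"
  proof -
    have "(-2) ^ n * (-27) ^ n = (2 ^ n * 3 ^ n * 9 ^ n :: int)"
      by (simp flip: power_mult_distrib)
    then show ?thesis by (simp add: power2_eq_square algebra_simps)
  qed
  finally have "int C * (9 ^ n * fact n ^ 3 * ?pc) = (-2) ^ n * ?pa * ?pb * ?pc ^ 2 * (-27) ^ n"
    by simp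
  then have "wz_B n 0 = of_int (int C) / of_int ((-27) ^ n)"
    unfolding wz_B_def
    by (intro of_int_fraction_eq[where X = 1 and Y = 1, simplified] wz_B_denominator_nonzero) simp_all
  then show ?thesis
    unfolding wz_F_def C_def by simp
qed

lemma sum_eq_sum_wz_F_0_right:
  assumes "0 < N"
  shows "(\<Sum>k = 0..N - 1. (15 * of_nat k + 4) / (-27) ^ k
           * of_nat ((2 * k choose k) ^ 2 * (3 * k choose k))) = (\<Sum>n<N. wz_F n 0)"
proof -
  have "{0..N - 1} = {..<N}" using assms by auto
  then show ?thesis by (simp add: wz_F_0_right)
qed

lemma wz_G_numerator_at_pole:
  fixes n k :: int
  assumes "3*k+1 = - n"
  shows "27 * n ^ 3 * (3 * n - 1 - 3*k) * wz_Q n k = n ^ 7 * 216"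
proof -
  have n: "n = - (3*k+1)" using assms by simp
  have "wz_Q n k = 2 * n ^ 3"
    unfolding n wz_Q_def by (simp add: algebra_simps power2_eq_square power3_eq_cube)
  moreover have "3 * n - 1 - 3*k = 4 * n" using assms by simp
  ultimately show ?thesis by (simp add: eval_nat_numeral)
qed

lemma prime_not_dvd_wz_B_denominator:
  assumes p: "prime p" and K: "int p dvd 3*K+1" and n: "n < p"
  shows "\<not> int p dvd 9 ^ n * fact n ^ 3 * ap_prod (2-3*K) 3 n"
proof -
  have pr: "prime (int p)" using p by simp
  have p3: "\<not> int p dvd 3"
  proof
    assume "int p dvd 3"
    then have "int p dvd 3 * K" by (rule dvd_mult2)
    with K have "int p dvd (3 * K + 1) - 3 * K" by (rule dvd_diff)
    then show False using pr not_prime_unit by simp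
  qed
  have "\<not> int p dvd ap_prod (2-3*K) 3 n"
  proof
    assume "int p dvd ap_prod (2-3*K) 3 n"
    then obtain j where j: "j < n" "int p dvd 2 - 3*K + 3 * int j"
      unfolding ap_prod_def using pr by (auto simp: prime_dvd_prod_iff)
    have "int p dvd (2 - 3*K + 3 * int j) + (3*K + 1)"
      using j(2) K by (rule dvd_add)
    then have "int p dvd 3 * (int j + 1)" by (simp add: algebra_simps)
    then have "int p dvd int j + 1" using pr p3 prime_dvd_mult_iff[OF pr, of 3 "int j + 1"] by simp
    then show False using j(1) n by (auto dest: zdvd_imp_le)
  qed
  moreover have "\<not> int p dvd 9 ^ n" using p p3 by (rule prime_not_dvd_nine_power)
  moreover have "\<not> int p dvd fact n" using p n by (rule prime_not_dvd_fact_int)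
  ultimately show ?thesis using pr by (simp add: prime_dvd_mult_iff prime_dvd_power_iff)
qed

lemma p_integral_wz_F_div_p_squared:
  assumes p: "prime p" and K: "int p dvd 3*K+1" and n: "0 < n" "n < p"
  shows "p_integral p (wz_F n K / of_nat p ^ 2)"
proof -
  define N where "N = (15 * int n + 12 * K + 4)
      * ((-2) ^ n * ap_prod 1 2 n * ap_prod (3*K+1) 3 n * ap_prod (6*K+2) 3 n ^ 2)"
  define D where "D = 9 ^ n * fact n ^ 3 * ap_prod (2-3*K) 3 n"
  have eq: "wz_F n K / of_nat p ^ 2 = of_int N / of_int (D * int p ^ 2)"
    unfolding wz_F_def wz_B_def N_def D_def
    by (simp only: of_int_mult of_int_power of_int_of_nat_eq times_divide_eq_right divide_divide_eq_left)
  have "D \<noteq> 0" unfolding D_def by (rule wz_B_denominator_nonzero)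
  moreover have "\<not> int p dvd D" unfolding D_def using p K n(2) by (rule prime_not_dvd_wz_B_denominator)
  ultimately have vD: "multiplicity (int p) (D * int p ^ 2) = 2"
    using p by (simp add: prime_elem_multiplicity_mult_distrib not_dvd_imp_multiplicity_0)
  have "6*K + 2 dvd ap_prod (6*K+2) 3 n"
    using dvd_ap_prod[of 0 n "6*K+2" 3] n(1) by simp
  moreover have "int p dvd 6*K + 2"
    using dvd_mult[OF K, of 2] by (simp add: algebra_simps)
  ultimately have "int p ^ 2 dvd ap_prod (6*K+2) 3 n ^ 2"
    by (intro dvd_power_same) (rule dvd_trans)
  then have "int p ^ multiplicity (int p) (D * int p ^ 2) dvd N"
    unfolding vD N_def by (simp add: dvd_mult)
  then show ?thesis
    unfolding eq using p \<open>D \<noteq> 0\<close> by (intro p_integral_of_int_divide) auto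
qed

lemma multiplicity_wz_B_denominator_prime:
  assumes p: "prime p" "p > 3" and k: "\<bar>3*k+1\<bar> \<le> int p"
  shows "multiplicity (int p) (ap_prod (2-3*k) 3 p) = 1"
proof (rule multiplicity_ap_prod_prime[OF p(1)])
  show "\<not> int p dvd 3" using p(2) by (auto dest: zdvd_imp_le)
  fix j assume "j < p"
  have "p \<noteq> 4" using prime_odd_nat[OF p(1)] p(2) by auto
  then have sq: "4 * int p < int p ^ 2" using p(2) by (simp add: power2_eq_square)
  have "\<bar>2 - 3*k + 3 * int j\<bar> \<le> 4 * int p" using k \<open>j < p\<close> by linarith
  moreover have "2 - 3*k + 3 * int j \<noteq> 0" by presburger
  ultimately show "2 - 3*k + 3 * int j \<noteq> 0 \<and> \<not> int p ^ 2 dvd 2 - 3*k + 3 * int j"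
    using sq by (auto dest: dvd_imp_le_int)
qed

lemma prime_power_dvd_wz_G_numerator:
  assumes p: "prime p" "p > 3" and k: "\<bar>3*k+1\<bar> \<le> int p" "3*k+1 \<noteq> int p"
  shows "int p ^ (6 + 4 * multiplicity (int p) (3*k+1))
    dvd (-2) ^ p * ap_prod 1 2 p * ap_prod (3*k+1) 3 p * ap_prod (6*k+2) 3 p ^ 2
      * (27 * int p ^ 3 * (3 * int p - 1 - 3*k) * wz_Q (int p) k)"
    (is "_ dvd ?N")
proof -
  have pr: "prime (int p)" using p by simp
  have p3: "\<not> int p dvd 3" using p(2) by (auto dest: zdvd_imp_le)
  have k0: "3*k+1 \<noteq> 0" by presburger
  have "int p dvd (-2) ^ p * ap_prod 1 2 p * ap_prod (3*k+1) 3 p"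
    using ap_prod_dvd_prime[OF p(1) p3] by (simp add: dvd_mult)
  moreover have "int p ^ 2 dvd ap_prod (6*k+2) 3 p ^ 2"
    using ap_prod_dvd_prime[OF p(1) p3] by (simp add: dvd_power_same)
  ultimately have pbc: "int p * int p ^ 2
      dvd (-2) ^ p * ap_prod 1 2 p * ap_prod (3*k+1) 3 p * ap_prod (6*k+2) 3 p ^ 2"
    by (rule mult_dvd_mono)
  show ?thesis
  proof (cases "int p dvd 3*k+1")
    case False
    have "int p * int p ^ 2 * int p ^ 3 dvd ?N"
      by (rule mult_dvd_mono[OF pbc]) simp
    moreover have "int p * int p ^ 2 * int p ^ 3 = int p ^ (6 + 4 * multiplicity (int p) (3*k+1))"
      using False by (simp add: not_dvd_imp_multiplicity_0 flip: power_Suc power_add)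
    ultimately show ?thesis by simp
  next
    case True
    txt \<open>Here the exponent is 10: the factor (3k+1)^4 = p^4 in the denominator of wz_G is
      offset by 3p - 1 - 3k = 4p and wz_Q p k = 2p^3.\<close>
    have "\<bar>int p\<bar> \<le> \<bar>3*k+1\<bar>" using dvd_imp_le_int[OF k0 True] .
    then have pole: "3*k+1 = - int p" using k(1,2) by linarith
    have "multiplicity (int p) (3*k+1) = 1"
      using multiplicity_normalize_right[of "int p" "- int p"] pr unfolding pole by simp
    moreover have "27 * int p ^ 3 * (3 * int p - 1 - 3*k) * wz_Q (int p) k = int p ^ 7 * 216"
      using pole by (rule wz_G_numerator_at_pole)
    then have "int p ^ 7 dvd 27 * int p ^ 3 * (3 * int p - 1 - 3*k) * wz_Q (int p) k"
      by (metis dvd_triv_left)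
    then have "int p * int p ^ 2 * int p ^ 7 dvd ?N"
      by (rule mult_dvd_mono[OF pbc])
    moreover have "int p * int p ^ 2 * int p ^ 7 = int p ^ (6 + 4 * multiplicity (int p) (3*k+1))"
      using \<open>multiplicity (int p) (3*k+1) = 1\<close> by (simp flip: power_Suc power_add)
    ultimately show ?thesis by simp
  qed
qed

lemma p_integral_wz_G_div_p_squared:
  assumes p: "prime p" "p > 3"
    and k: "\<bar>3*k+1\<bar> \<le> int p" "3*k+1 \<noteq> int p" "\<not> int p dvd 6*k+5"
  shows "p_integral p (wz_G p k / of_nat p ^ 2)"
proof -
  have pr: "prime (int p)" using p by simp
  have p3: "\<not> int p dvd 3" using p(2) by (auto dest: zdvd_imp_le)
  have p4: "\<not> int p dvd 4"
  proof
    assume "int p dvd 4"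
    then have "int p dvd 2" using prime_dvd_mult_iff[OF pr, of 2 2] by simp
    then show False using p(2) by (auto dest: zdvd_imp_le)
  qed
  have k0: "3*k+1 \<noteq> 0" "6*k+5 \<noteq> 0" "\<not> 3 dvd 2 - 3*k" by presburger+
  define N where "N = (-2) ^ p * ap_prod 1 2 p * ap_prod (3*k+1) 3 p * ap_prod (6*k+2) 3 p ^ 2
      * (27 * int p ^ 3 * (3 * int p - 1 - 3*k) * wz_Q (int p) k)"
  define D where "D = 9 ^ p * fact p ^ 3 * ap_prod (2-3*k) 3 p
      * (4 * (3*k+1) ^ 4 * (6*k+5) ^ 2) * int p ^ 2"
  have eq: "wz_G p k / of_nat p ^ 2 = of_int N / of_int D"
    unfolding wz_G_def wz_B_def N_def D_def
    by (simp only: of_int_mult of_int_power of_int_of_nat_eq times_divide_eq_left divide_divide_eq_left)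
  note multiplicity_fact_prime[OF p(1)]
  moreover have "multiplicity (int p) (ap_prod (2-3*k) 3 p) = 1"
    using p k(1) by (rule multiplicity_wz_B_denominator_prime)
  moreover have "\<not> int p dvd 9 ^ p" using p(1) p3 by (rule prime_not_dvd_nine_power)
  ultimately have vD: "multiplicity (int p) D = 6 + 4 * multiplicity (int p) (3*k+1)" "D \<noteq> 0"
    using pr p4 k(3) k0 unfolding D_def
    by (simp_all add: prime_elem_multiplicity_mult_distrib prime_elem_multiplicity_power_distrib
        not_dvd_imp_multiplicity_0 ap_prod_nonzero)
  have "int p ^ (6 + 4 * multiplicity (int p) (3*k+1)) dvd N"
    unfolding N_def using p k(1,2) by (rule prime_power_dvd_wz_G_numerator)
  then show ?thesis
    unfolding eq using p(1) vD by (intro p_integral_of_int_divide) auto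
qed

lemma p_integral_wz_G_between:
  assumes p: "prime p" "p > 3" and K: "\<bar>3*K+1\<bar> = int p"
    and k: "min 0 K \<le> k" "k < max 0 K"
  shows "p_integral p (wz_G p k / of_nat p ^ 2)"
proof (rule p_integral_wz_G_div_p_squared[OF p])
  have pr: "prime (int p)" using p by simp
  have p3: "\<not> int p dvd 3" using p(2) by (auto dest: zdvd_imp_le)
  have "int p dvd 3*K+1" using K by (intro dvd_if_abs_eq) simp
  show "\<bar>3*k+1\<bar> \<le> int p" "3*k+1 \<noteq> int p"
    using k K by (auto simp: abs_if min_def max_def split: if_splits)
  show "\<not> int p dvd 6*k+5"
  proof
    assume "int p dvd 6*k+5"
    moreover have "int p dvd 2 * (3*K+1)"
      using \<open>int p dvd 3*K+1\<close> by (rule dvd_mult)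
    ultimately have "int p dvd (6*k+5) - 2 * (3*K+1)"
      by (rule dvd_diff)
    then have "int p dvd 3 * (2*(k-K)+1)" by (simp add: algebra_simps)
    then have "int p dvd 2*(k-K)+1" using p3 prime_dvd_mult_iff[OF pr] by blast
    moreover have "2*(k-K)+1 \<noteq> 0" by presburger
    moreover have "\<bar>2*(k-K)+1\<bar> < int p"
      using k K by (auto simp: abs_if min_def max_def split: if_splits)
    ultimately show False using dvd_imp_le_int[of "2*(k-K)+1" "int p"] by simp
  qed
qed

lemma p_integral_wz_F_sum_diff_div_p_squared:
  assumes p: "prime p" "p > 3" and K: "\<bar>3*K+1\<bar> = int p"
  shows "p_integral p (((\<Sum>n<p. wz_F n K) - (\<Sum>n<p. wz_F n 0)) / of_nat p ^ 2)"
proof -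
  have G: "p_integral p (wz_G p k / of_nat p ^ 2)" if "min 0 K \<le> k" "k < max 0 K" for k
    using p K that by (rule p_integral_wz_G_between)
  consider "0 \<le> K" | "K < 0" by linarith
  then show ?thesis
  proof cases
    case 1
    have eq: "(\<Sum>n<p. wz_F n K) - (\<Sum>n<p. wz_F n 0) = (\<Sum>k\<in>{0..<K}. wz_G p k)"
      using wz_telescope[of wz_F wz_G 0 K p] wz_pair 1 by simp
    show ?thesis
      unfolding eq sum_divide_distrib using G 1 by (intro p_integral_sum[OF p(1)]) auto
  next
    case 2
    have "(\<Sum>n<p. wz_F n 0) - (\<Sum>n<p. wz_F n K) = (\<Sum>k\<in>{K..<0}. wz_G p k)"
      using wz_telescope[of wz_F wz_G K 0 p] wz_pair 2 by simp
    then have eq: "(\<Sum>n<p. wz_F n K) - (\<Sum>n<p. wz_F n 0) = - (\<Sum>k\<in>{K..<0}. wz_G p k)"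
      by (simp add: algebra_simps)
    show ?thesis
      unfolding eq minus_divide_left[symmetric] sum_divide_distrib using G 2
      by (intro p_integral_uminus p_integral_sum[OF p(1)]) auto
  qed
qed

lemma sum_wz_F_cong_wz_F_0_left:
  assumes p: "prime p" "p > 3" and K: "\<bar>3*K+1\<bar> = int p"
  shows "p_integral p (((\<Sum>n<p. wz_F n 0) - wz_F 0 K) / of_nat p ^ 2)"
proof -
  have "int p dvd 3*K+1" using K by (intro dvd_if_abs_eq) simp
  then have F: "p_integral p ((\<Sum>n\<in>{1..<p}. wz_F n K) / of_nat p ^ 2)"
    unfolding sum_divide_distrib using p_integral_wz_F_div_p_squared[OF p(1)]
    by (intro p_integral_sum[OF p(1)]) auto
  have "(\<Sum>n<p. wz_F n K) = wz_F 0 K + (\<Sum>n\<in>{1..<p}. wz_F n K)"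
    using p by (simp add: lessThan_atLeast0 sum.atLeast_Suc_lessThan)
  then have "((\<Sum>n<p. wz_F n 0) - wz_F 0 K) / of_nat p ^ 2
      = (\<Sum>n\<in>{1..<p}. wz_F n K) / of_nat p ^ 2
        + - (((\<Sum>n<p. wz_F n K) - (\<Sum>n<p. wz_F n 0)) / of_nat p ^ 2)"
    by (simp add: diff_divide_distrib add_divide_distrib)
  then show ?thesis
    using p_integral_add[OF p(1) F p_integral_uminus[OF p_integral_wz_F_sum_diff_div_p_squared[OF p K]]]
    by simp
qed

theorem theorem9:
  fixes p :: nat
  assumes "prime p" and "p > 3"
  shows "rat_cong_p p
           (\<Sum>k = 0..p - 1. (15 * of_nat k + 4) / (-27) ^ k
                * of_nat ((2 * k choose k) ^ 2 * (3 * k choose k)))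
           (4 * of_int (Legendre (int p) 3) * of_nat p)
           (of_nat p ^ 2)"
proof -
  obtain K where K: "3 * K + 1 = Legendre (int p) 3 * int p" "\<bar>3 * K + 1\<bar> = int p"
    using obtain_3K_plus_1_eq_Legendre_times_prime[OF assms] .
  have "wz_F 0 K = 4 * of_int (Legendre (int p) 3) * of_nat p"
    using arg_cong[OF K(1), of "\<lambda>x. 4 * (of_int x :: rat)"] by simp
  then have "p_integral p (((\<Sum>n<p. wz_F n 0) - 4 * of_int (Legendre (int p) 3) * of_nat p) / of_nat p ^ 2)"
    using sum_wz_F_cong_wz_F_0_left[OF assms K(2)] by simp
  then show ?thesis
    unfolding sum_eq_sum_wz_F_0_right[OF prime_gt_0_nat[OF assms(1)]]
    using assms(1) by (intro rat_cong_p_if_p_integral) simp_all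
qed

end
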